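(* Let $R=(c_1,\dots,c_k)+B^\oplus$ be an atomic resimple expression. For each $j\in\{1,\dots,k\}$ let $p_j=n$ if $n\mathbf{e}_j\in B$, and $p_j=2$ if $B$ contains no element of the form $n\mathbf{e}_j$. Then the complete deterministic automaton $\mathcal{A}=\mathcal{A}_1\between\cdots\between\mathcal{A}_k$ described below accepts $\varphi^{-1}(R)$ and has exactly $\prod_{j=1}^k (c_j+p_j)$ states.
   Context: $\mathbb{N}$ includes $0$; $\mathbf{e}_j$ is the $j$-th unit vector of $\mathbb{N}^k$. For finite $B\subseteq\mathbb{N}^k$, $B^\oplus$ is the set of $\mathbb{N}$-linear combinations of elements of $B$. $B$ is free if every element of $B^\oplus$ has a unique such representation; an element is primary if it is $n\mathbf{e}_j$ with $n>0$; an atomic resimple expression is $\gamma+B^\oplus$ with $\gamma=(c_1,\dots,c_k)\in\mathbb{N}^k$ and $B$ a free basis all of whose elements are primary (so $B$ contains at most one element of the form $n\mathbf{e}_j$ for each $j$). Let $A=\{a_1,\dots,a_k\}$ and $\varphi(w)=(|w|_{a_1},\dots,|w|_{a_k})$ for $w\in A^*$. For each $j$, $\mathcal{A}_j$ is the complete deterministic automaton over the one-letter alphabet $\{a_j\}$ accepting $\{a_j^{m}: m\in S_j\}$, where $S_j=c_j+p_j\mathbb{N}$ if $p_j\mathbf{e}_j\in B$ and $S_j=\{c_j\}$ otherwise: in the first case it has states $0,1,\dots,c_j+p_j-1$, initial state $0$, transitions $i\xrightarrow{a_j}i+1$ for $i<c_j+p_j-1$ and $c_j+p_j-1\xrightarrow{a_j}c_j$,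 final state $c_j$; in the second case it has states $0,\dots,c_j$ plus a sink state, transitions $i\xrightarrow{a_j}i+1$ for $i<c_j$, $c_j\xrightarrow{a_j}$ sink, sink $\xrightarrow{a_j}$ sink, final state $c_j$. Each $\mathcal{A}_j$ is regarded as an automaton over $A$. The shuffle product of $\langle Q',A,E',I',T'\rangle$ and $\langle Q'',A,E'',I'',T''\rangle$ is $\langle Q'\times Q'',A,E,I'\times I'',T'\times T''\rangle$ with $E=\{((p',p''),a,(q',p'')):p''\in Q'',(p',a,q')\in E'\}\cup\{((p',p''),a,(p',q'')):p'\in Q',(p'',a,q'')\in E''\}$, iterated for more factors. *)

theory Defs
  imports Main
begin

(* Alphabet A = {a_1,...,a_k} is represented by the letters 0..<k (letter j-1 stands for a_j).
   Vectors of N^k are functions nat => nat that vanish outside {..<k}. *)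

definition unitv :: "nat \<Rightarrow> (nat \<Rightarrow> nat)" where
  "unitv j = (\<lambda>i. if i = j then 1 else 0)"

definition smul :: "nat \<Rightarrow> (nat \<Rightarrow> nat) \<Rightarrow> (nat \<Rightarrow> nat)" where
  "smul n v = (\<lambda>i. n * v i)"

definition lin_comb :: "(nat \<Rightarrow> nat) set \<Rightarrow> ((nat \<Rightarrow> nat) \<Rightarrow> nat) \<Rightarrow> (nat \<Rightarrow> nat)" where
  "lin_comb B l = (\<lambda>i. \<Sum>b\<in>B. l b * b i)"

definition oplus_set :: "(nat \<Rightarrow> nat) set \<Rightarrow> (nat \<Rightarrow> nat) set" where
  "oplus_set B = {lin_comb B l | l. True}"

definition free_basis :: "(nat \<Rightarrow> nat) set \<Rightarrow> bool" where
  "free_basis B \<longleftrightarrow> (\<forall>l m. lin_comb B l = lin_comb B m \<longrightarrow> (\<forall>b\<in>B. l b = m b))"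

definition primary :: "nat \<Rightarrow> (nat \<Rightarrow> nat) \<Rightarrow> bool" where
  "primary k b \<longleftrightarrow> (\<exists>n j. n > 0 \<and> j < k \<and> b = smul n (unitv j))"

definition atomic_resimple :: "nat \<Rightarrow> (nat \<Rightarrow> nat) \<Rightarrow> (nat \<Rightarrow> nat) set \<Rightarrow> bool" where
  "atomic_resimple k c B \<longleftrightarrow> finite B \<and> (\<forall>i\<ge>k. c i = 0) \<and> free_basis B \<and> (\<forall>b\<in>B. primary k b)"

definition resimple_set :: "(nat \<Rightarrow> nat) \<Rightarrow> (nat \<Rightarrow> nat) set \<Rightarrow> (nat \<Rightarrow> nat) set" where
  "resimple_set c B = {(\<lambda>i. c i + x i) | x. x \<in> oplus_set B}"

definition parikh :: "nat list \<Rightarrow> (nat \<Rightarrow> nat)" where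
  "parikh w = (\<lambda>i. count_list w i)"

definition has_period :: "(nat \<Rightarrow> nat) set \<Rightarrow> nat \<Rightarrow> bool" where
  "has_period B j \<longleftrightarrow> (\<exists>n>0. smul n (unitv j) \<in> B)"

definition pj :: "(nat \<Rightarrow> nat) set \<Rightarrow> nat \<Rightarrow> nat" where
  "pj B j = (if has_period B j then (THE n. n > 0 \<and> smul n (unitv j) \<in> B) else 2)"

record 's aut =
  astates :: "'s set"
  atrans :: "('s \<times> nat \<times> 's) set"
  ainit :: "'s set"
  afinal :: "'s set"

inductive path :: "'s aut \<Rightarrow> 's \<Rightarrow> nat list \<Rightarrow> 's \<Rightarrow> bool" for M where
  path_nil: "path M q [] q"
| path_cons: "(q, a, q') \<in> atrans M \<Longrightarrow> path M q' w r \<Longrightarrow> path M q (a # w) r"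

definition lang :: "'s aut \<Rightarrow> nat set \<Rightarrow> nat list set" where
  "lang M Sig = {w \<in> lists Sig. \<exists>q0\<in>ainit M. \<exists>qf\<in>afinal M. path M q0 w qf}"

definition complete_det :: "'s aut \<Rightarrow> nat set \<Rightarrow> bool" where
  "complete_det M Sig \<longleftrightarrow>
     ainit M \<subseteq> astates M \<and> afinal M \<subseteq> astates M \<and> card (ainit M) = 1 \<and>
     atrans M \<subseteq> astates M \<times> Sig \<times> astates M \<and>
     (\<forall>q\<in>astates M. \<forall>a\<in>Sig. \<exists>!q'. (q, a, q') \<in> atrans M)"

(* The automaton A_j (letter j), states Some i, sink = None *)
definition autj :: "(nat \<Rightarrow> nat) \<Rightarrow> (nat \<Rightarrow> nat) set \<Rightarrow> nat \<Rightarrow> nat option aut" where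
  "autj c B j = (if has_period B j then
      \<lparr> astates = Some ` {0..<c j + pj B j},
        atrans = {(Some i, j, Some (i+1)) | i. i < c j + pj B j - 1}
                 \<union> {(Some (c j + pj B j - 1), j, Some (c j))},
        ainit = {Some 0}, afinal = {Some (c j)} \<rparr>
    else
      \<lparr> astates = Some ` {0..c j} \<union> {None},
        atrans = {(Some i, j, Some (i+1)) | i. i < c j}
                 \<union> {(Some (c j), j, None), (None, j, None)},
        ainit = {Some 0}, afinal = {Some (c j)} \<rparr>)"

(* Iterated shuffle product of a list of automata; states are tuples represented as lists *)
definition shuffle :: "'s aut list \<Rightarrow> 's list aut" where
  "shuffle As = (let k = length As in
     \<lparr> astates = {q. length q = k \<and> (\<forall>j<k. q ! j \<in> astates (As ! j))},
       atrans = {(q, a, q[j := q']) | q a j q'. length q = k \<and> j < k \<and>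
                   (\<forall>i<k. i \<noteq> j \<longrightarrow> q ! i \<in> astates (As ! i)) \<and>
                   (q ! j, a, q') \<in> atrans (As ! j)},
       ainit = {q. length q = k \<and> (\<forall>j<k. q ! j \<in> ainit (As ! j))},
       afinal = {q. length q = k \<and> (\<forall>j<k. q ! j \<in> afinal (As ! j))} \<rparr>)"

end

theory Submission
  imports Defs
begin

text \<open>Each automaton \<open>A\<^sub>j\<close> is complete, deterministic and reads only the letter \<open>a\<^sub>j\<close>, so
in the shuffle product the letter \<open>a\<^sub>j\<close> moves only the \<open>j\<close>-th coordinate. After reading \<open>w\<close>,
coordinate \<open>j\<close> is therefore the state \<open>A\<^sub>j\<close> reaches after \<open>|w|\<^sub>j\<close> steps, and \<open>w\<close> is accepted
iff \<open>|w|\<^sub>j \<in> S\<^sub>j\<close> for every \<open>j\<close>; the states are the tuples of component states. Since \<open>B\<close> is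
free and consists of primary vectors, it contains at most one vector \<open>p e\<^sub>j\<close> for each \<open>j\<close>,
so \<open>\<gamma> + B\<^sup>\<oplus>\<close> is exactly the product of the sets \<open>S\<^sub>j\<close>.\<close>

lemma smul_unitv_apply [simp]: "smul n (unitv j) i = (if i = j then n else 0)"
  by (simp add: smul_def unitv_def)

lemma smul_unitv_eq_iff: "0 < n \<Longrightarrow> smul n (unitv j) = smul m (unitv i) \<longleftrightarrow> n = m \<and> j = i"
  by (auto simp: fun_eq_iff)

lemma lin_comb_indicator:
  assumes "finite B" "b \<in> B"
  shows "lin_comb B (\<lambda>b'. if b' = b then m else 0) = smul m b"
proof -
  have "(\<Sum>b'\<in>B. (if b' = b then m else 0) * b' i) = m * b i" for i
    using assms by (simp add: if_distrib [of "\<lambda>x. x * _"] sum.delta' cong: if_cong)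
  then show ?thesis by (simp add: lin_comb_def smul_def)
qed

lemma free_basis_period_unique:
  assumes "finite B" "free_basis B" "smul n (unitv j) \<in> B" "smul m (unitv j) \<in> B" "0 < n" "0 < m"
  shows "n = m"
proof (rule ccontr)
  assume "n \<noteq> m"
  let ?bn = "smul n (unitv j)" and ?bm = "smul m (unitv j)"
  have "?bn \<noteq> ?bm" using \<open>n \<noteq> m\<close> \<open>0 < n\<close> by (simp add: smul_unitv_eq_iff)
  have "lin_comb B (\<lambda>b. if b = ?bn then m else 0) = lin_comb B (\<lambda>b. if b = ?bm then n else 0)"
    using assms by (simp only: lin_comb_indicator) (simp add: smul_def unitv_def fun_eq_iff)
  with \<open>free_basis B\<close> \<open>?bn \<in> B\<close> have "(if ?bn = ?bn then m else 0) = (if ?bn = ?bm then n else 0)"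
    unfolding free_basis_def by blast
  with \<open>?bn \<noteq> ?bm\<close> \<open>0 < m\<close> show False by simp
qed

text \<open>Without a period \<open>pj B j\<close> is the default \<open>2\<close>, so it is positive for every \<open>j\<close>.\<close>

lemma pj_pos: "finite B \<Longrightarrow> free_basis B \<Longrightarrow> 0 < pj B j"
  and smul_pj_in_basis: "finite B \<Longrightarrow> free_basis B \<Longrightarrow> has_period B j \<Longrightarrow> smul (pj B j) (unitv j) \<in> B"
proof -
  assume fin: "finite B" and free: "free_basis B"
  have pj_period: "0 < pj B j \<and> smul (pj B j) (unitv j) \<in> B" if "has_period B j"
  proof -
    obtain n where n: "0 < n" "smul n (unitv j) \<in> B" using \<open>has_period B j\<close> has_period_def by blast
    have "(THE n. 0 < n \<and> smul n (unitv j) \<in> B) = n"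
      using n free_basis_period_unique[OF fin free] by blast
    with n that show ?thesis by (simp add: pj_def)
  qed
  then show "0 < pj B j" by (cases "has_period B j") (auto simp: pj_def)
  show "has_period B j \<Longrightarrow> smul (pj B j) (unitv j) \<in> B" using pj_period by blast
qed

lemma primary_basis_vector_at:
  assumes "finite B" "free_basis B" "\<forall>b\<in>B. primary k b" "b \<in> B" "b j \<noteq> 0"
  shows "has_period B j \<and> b = smul (pj B j) (unitv j)"
proof -
  obtain n i where "0 < n" "b = smul n (unitv i)" using assms(3,4) primary_def by blast
  with assms(5) have b: "0 < n" "b = smul n (unitv j)" by (auto split: if_splits)
  with assms(4) have "has_period B j" by (auto simp: has_period_def)
  with b assms show ?thesis
    using free_basis_period_unique pj_pos smul_pj_in_basis by metis
qed

lemma lin_comb_apply: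
  assumes "finite B" "free_basis B" "\<forall>b\<in>B. primary k b"
  shows "lin_comb B l j = (if has_period B j then l (smul (pj B j) (unitv j)) * pj B j else 0)"
proof -
  have support: "{b\<in>B. b j \<noteq> 0} = (if has_period B j then {smul (pj B j) (unitv j)} else {})"
    using primary_basis_vector_at[OF assms] smul_pj_in_basis[OF assms(1,2)] pj_pos[OF assms(1,2)]
    by auto
  have "lin_comb B l j = (\<Sum>b\<in>{b\<in>B. b j \<noteq> 0}. l b * b j)"
    using assms(1) by (simp add: lin_comb_def sum.inter_filter) (rule sum.cong, auto)
  then show ?thesis unfolding support by simp
qed

lemma has_period_less:
  assumes "finite B" "free_basis B" "\<forall>b\<in>B. primary k b" "has_period B j"
  shows "j < k"
proof -
  have "smul (pj B j) (unitv j) \<in> B" using smul_pj_in_basis assms by blast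
  then obtain n i where "0 < n" "i < k" "smul (pj B j) (unitv j) = smul n (unitv i)"
    using assms(3) primary_def by blast
  then show ?thesis using pj_pos[OF assms(1,2)] by (simp add: smul_unitv_eq_iff)
qed

lemma resimple_set_iff:
  assumes "finite B" "free_basis B" "\<forall>b\<in>B. primary k b"
  shows "x \<in> resimple_set c B \<longleftrightarrow>
    (\<forall>j. if has_period B j then c j \<le> x j \<and> pj B j dvd (x j - c j) else x j = c j)"
    (is "_ \<longleftrightarrow> (\<forall>j. ?in_Sj j)")
proof
  assume "x \<in> resimple_set c B"
  then obtain l where "x = (\<lambda>j. c j + lin_comb B l j)"
    unfolding resimple_set_def oplus_set_def by auto
  then show "\<forall>j. ?in_Sj j" by (simp add: lin_comb_apply[OF assms])
next
  assume in_S: "\<forall>j. ?in_Sj j"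
  \<comment> \<open>For \<open>b = p e\<^sub>j\<close>, \<open>j\<close> is the only coordinate with \<open>b j \<noteq> 0\<close>, and \<open>b j = p\<close>.\<close>
  define l where "l b = (let j = SOME j. b j \<noteq> 0 in (x j - c j) div b j)" for b :: "nat \<Rightarrow> nat"
  have "x j = c j + lin_comb B l j" for j
  proof (cases "has_period B j")
    case True
    have "(SOME i. smul (pj B j) (unitv j) i \<noteq> 0) = j"
      using pj_pos[OF assms(1,2)] by (auto split: if_splits)
    then have "l (smul (pj B j) (unitv j)) = (x j - c j) div pj B j" by (simp add: l_def)
    with True in_S show ?thesis by (auto simp: lin_comb_apply[OF assms] elim!: allE[of _ j])
  next
    case False
    with in_S show ?thesis by (auto simp: lin_comb_apply[OF assms] elim!: allE[of _ j])
  qed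
  then show "x \<in> resimple_set c B"
    unfolding resimple_set_def oplus_set_def by (auto intro!: exI[of _ "\<lambda>j. x j - c j"] exI[of _ l])
qed

lemma card_lists_nth_in:
  "card {xs. length xs = n \<and> (\<forall>j<n. xs ! j \<in> S j)} = (\<Prod>j<n. card (S j))"
proof (induction n arbitrary: S)
  case 0
  then show ?case by simp
next
  case (Suc n)
  have "{xs. length xs = Suc n \<and> (\<forall>j<Suc n. xs ! j \<in> S j)}
      = (\<lambda>(x, xs). x # xs) ` (S 0 \<times> {xs. length xs = n \<and> (\<forall>j<n. xs ! j \<in> S (Suc j))})"
    (is "?lhs = _ ` ?rhs")
  proof (intro set_eqI iffI)
    fix xs assume "xs \<in> ?lhs"
    then show "xs \<in> (\<lambda>(x, xs). x # xs) ` ?rhs"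
      by (cases xs) (auto intro!: image_eqI[of _ _ "(hd xs, tl xs)"])
  next
    fix xs assume "xs \<in> (\<lambda>(x, xs). x # xs) ` ?rhs"
    then show "xs \<in> ?lhs" by (auto simp: less_Suc_eq_0_disj)
  qed
  then have "card ?lhs = card (S 0 \<times> {xs. length xs = n \<and> (\<forall>j<n. xs ! j \<in> S (Suc j))})"
    by (simp add: card_image inj_on_def)
  also have "\<dots> = (\<Prod>j<Suc n. card (S j))"
    by (simp add: card_cartesian_product Suc.IH prod.lessThan_Suc_shift del: prod.lessThan_Suc)
  finally show ?case .
qed

lemma card_shuffle_astates:
  "card (astates (shuffle As)) = (\<Prod>j<length As. card (astates (As ! j)))"
  by (simp add: shuffle_def Let_def card_lists_nth_in)

definition shuffle_run :: "(nat \<Rightarrow> 's \<Rightarrow> 's) \<Rightarrow> 's list \<Rightarrow> nat list \<Rightarrow> 's list" where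
  "shuffle_run step = foldl (\<lambda>q a. q[a := step a (q ! a)])"

lemma length_shuffle_run [simp]: "length (shuffle_run step q w) = length q"
  by (induction w arbitrary: q) (simp_all add: shuffle_run_def)

lemma nth_shuffle_run:
  "j < length q \<Longrightarrow> shuffle_run step q w ! j = (step j ^^ count_list w j) (q ! j)"
  by (induction w arbitrary: q)
    (auto simp: shuffle_run_def nth_list_update funpow_Suc_right simp del: funpow.simps)

locale one_letter_dfas =
  fixes As :: "'s aut list" and step :: "nat \<Rightarrow> 's \<Rightarrow> 's" and init :: "nat \<Rightarrow> 's"
  assumes atrans_iff: "j < length As \<Longrightarrow>
      (s, a, s') \<in> atrans (As ! j) \<longleftrightarrow> s \<in> astates (As ! j) \<and> a = j \<and> s' = step j s"
    and step_closed: "j < length As \<Longrightarrow> s \<in> astates (As ! j) \<Longrightarrow> step j s \<in> astates (As ! j)"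
    and ainit_eq: "j < length As \<Longrightarrow> ainit (As ! j) = {init j}"
    and init_in_astates: "j < length As \<Longrightarrow> init j \<in> astates (As ! j)"
    and afinal_subset: "j < length As \<Longrightarrow> afinal (As ! j) \<subseteq> astates (As ! j)"
begin

lemma astates_shuffle:
  "astates (shuffle As) = {q. length q = length As \<and> (\<forall>j<length As. q ! j \<in> astates (As ! j))}"
  by (simp add: shuffle_def Let_def)

lemma ainit_shuffle: "ainit (shuffle As) = {map init [0..<length As]}"
  using ainit_eq by (auto simp: shuffle_def Let_def intro: nth_equalityI)

lemma afinal_shuffle:
  "afinal (shuffle As) = {q. length q = length As \<and> (\<forall>j<length As. q ! j \<in> afinal (As ! j))}"
  by (simp add: shuffle_def Let_def)

lemma shuffle_step_closed:
  "q \<in> astates (shuffle As) \<Longrightarrow> a < length As \<Longrightarrow> q[a := step a (q ! a)] \<in> astates (shuffle As)"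
  using step_closed by (auto simp: astates_shuffle nth_list_update)

lemma atrans_shuffle_iff:
  "(q, a, r) \<in> atrans (shuffle As) \<longleftrightarrow>
     q \<in> astates (shuffle As) \<and> a < length As \<and> r = q[a := step a (q ! a)]"
proof
  assume "(q, a, r) \<in> atrans (shuffle As)"
  then obtain j s where "r = q[j := s]" "length q = length As" "j < length As"
    "\<forall>i<length As. i \<noteq> j \<longrightarrow> q ! i \<in> astates (As ! i)" "(q ! j, a, s) \<in> atrans (As ! j)"
    by (auto simp: shuffle_def Let_def)
  then show "q \<in> astates (shuffle As) \<and> a < length As \<and> r = q[a := step a (q ! a)]"
    using atrans_iff by (auto simp: astates_shuffle)
next
  assume "q \<in> astates (shuffle As) \<and> a < length As \<and> r = q[a := step a (q ! a)]"
  then show "(q, a, r) \<in> atrans (shuffle As)"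
    using atrans_iff by (auto simp: astates_shuffle shuffle_def Let_def intro!: exI[of _ a])
qed

lemma path_shuffle_iff:
  "q \<in> astates (shuffle As) \<Longrightarrow>
     path (shuffle As) q w r \<longleftrightarrow> w \<in> lists {..<length As} \<and> r = shuffle_run step q w"
proof (induction w arbitrary: q)
  case Nil
  then show ?case by (auto simp: shuffle_run_def elim: path.cases intro: path_nil)
next
  case (Cons a w)
  have "path (shuffle As) q (a # w) r \<longleftrightarrow>
      a < length As \<and> path (shuffle As) (q[a := step a (q ! a)]) w r"
    using Cons.prems by (auto simp: atrans_shuffle_iff elim: path.cases intro: path_cons)
  then show ?case
    using Cons shuffle_step_closed by (auto simp: shuffle_run_def)
qed

theorem complete_det_shuffle: "complete_det (shuffle As) {..<length As}"
  unfolding complete_det_def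
proof (intro conjI)
  show "ainit (shuffle As) \<subseteq> astates (shuffle As)" "afinal (shuffle As) \<subseteq> astates (shuffle As)"
    using init_in_astates afinal_subset by (auto simp: ainit_shuffle afinal_shuffle astates_shuffle)
  show "atrans (shuffle As) \<subseteq> astates (shuffle As) \<times> {..<length As} \<times> astates (shuffle As)"
    using shuffle_step_closed by (auto simp: atrans_shuffle_iff)
qed (auto simp: ainit_shuffle atrans_shuffle_iff)

theorem lang_shuffle:
  "lang (shuffle As) {..<length As} =
     {w \<in> lists {..<length As}. \<forall>j<length As. (step j ^^ count_list w j) (init j) \<in> afinal (As ! j)}"
proof -
  let ?q0 = "map init [0..<length As]"
  have "?q0 \<in> astates (shuffle As)" using init_in_astates by (simp add: astates_shuffle)
  then have "w \<in> lang (shuffle As) {..<length As} \<longleftrightarrow>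
      w \<in> lists {..<length As} \<and> shuffle_run step ?q0 w \<in> afinal (shuffle As)" for w
    by (auto simp: lang_def ainit_shuffle path_shuffle_iff)
  then show ?thesis by (auto simp: afinal_shuffle nth_shuffle_run)
qed

end

definition autj_step :: "(nat \<Rightarrow> nat) \<Rightarrow> (nat \<Rightarrow> nat) set \<Rightarrow> nat \<Rightarrow> nat option \<Rightarrow> nat option" where
  "autj_step c B j s = (case s of
      None \<Rightarrow> None
    | Some i \<Rightarrow>
        if has_period B j then Some (if i + 1 < c j + pj B j then i + 1 else c j)
        else if i < c j then Some (i + 1) else None)"

lemma ainit_autj [simp]: "ainit (autj c B j) = {Some 0}"
  and afinal_autj [simp]: "afinal (autj c B j) = {Some (c j)}"
  by (simp_all add: autj_def)

lemma card_astates_autj: "card (astates (autj c B j)) = c j + pj B j"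
  by (simp add: autj_def pj_def card_image)

lemma Some_in_astates_autj: "0 < pj B j \<Longrightarrow> i \<le> c j \<Longrightarrow> Some i \<in> astates (autj c B j)"
  by (auto simp: autj_def)

lemma atrans_autj_iff:
  "0 < pj B j \<Longrightarrow> (s, a, s') \<in> atrans (autj c B j) \<longleftrightarrow>
     s \<in> astates (autj c B j) \<and> a = j \<and> s' = autj_step c B j s"
  by (cases "has_period B j"; cases s) (auto simp: autj_def autj_step_def)

lemma autj_step_closed:
  "0 < pj B j \<Longrightarrow> s \<in> astates (autj c B j) \<Longrightarrow> autj_step c B j s \<in> astates (autj c B j)"
  by (auto simp: autj_def autj_step_def split: option.splits)

lemma one_letter_dfas_autj:
  assumes "\<And>j. 0 < pj B j"
  shows "one_letter_dfas (map (autj c B) [0..<k]) (autj_step c B) (\<lambda>_. Some 0)"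
  using assms atrans_autj_iff autj_step_closed Some_in_astates_autj
  by unfold_locales auto

lemma funpow_autj_step_periodic:
  assumes "has_period B j" "0 < pj B j"
  shows "(autj_step c B j ^^ m) (Some 0) = Some (if m < c j then m else c j + (m - c j) mod pj B j)"
proof (induction m)
  case 0
  then show ?case by simp
next
  case (Suc m)
  have "(autj_step c B j ^^ Suc m) (Some 0) =
      autj_step c B j (Some (if m < c j then m else c j + (m - c j) mod pj B j))"
    using Suc by simp
  also have "\<dots> = Some (if Suc m < c j then Suc m else c j + (Suc m - c j) mod pj B j)"
  proof (cases "m < c j")
    case False
    then have "(Suc m - c j) mod pj B j =
        (if Suc ((m - c j) mod pj B j) = pj B j then 0 else Suc ((m - c j) mod pj B j))"
      by (simp add: Suc_diff_le mod_Suc)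
    with False assms mod_less_divisor[OF assms(2), of "m - c j"] show ?thesis
      by (auto simp: autj_step_def)
  qed (use assms in \<open>auto simp: autj_step_def\<close>)
  finally show ?case .
qed

lemma funpow_autj_step_nonperiodic:
  assumes "\<not> has_period B j"
  shows "(autj_step c B j ^^ m) (Some 0) = (if m \<le> c j then Some m else None)"
proof (induction m)
  case (Suc m)
  have "(autj_step c B j ^^ Suc m) (Some 0) = autj_step c B j (if m \<le> c j then Some m else None)"
    using Suc by simp
  also have "\<dots> = (if Suc m \<le> c j then Some (Suc m) else None)"
    using assms by (auto simp: autj_step_def)
  finally show ?case .
qed simp

lemma autj_accepts_iff:
  assumes "0 < pj B j"
  shows "(autj_step c B j ^^ m) (Some 0) = Some (c j) \<longleftrightarrow>
    (if has_period B j then c j \<le> m \<and> pj B j dvd (m - c j) else m = c j)"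
  using assms funpow_autj_step_periodic[where c = c and m = m]
    funpow_autj_step_nonperiodic[where c = c and m = m]
  by (auto simp: mod_eq_0_iff_dvd)

lemma parikh_in_resimple_set_iff:
  assumes "atomic_resimple k c B" "w \<in> lists {..<k}"
  shows "parikh w \<in> resimple_set c B \<longleftrightarrow>
    (\<forall>j<k. if has_period B j then c j \<le> count_list w j \<and> pj B j dvd (count_list w j - c j)
           else count_list w j = c j)"
proof -
  have basis: "finite B" "free_basis B" "\<forall>b\<in>B. primary k b" and "\<forall>j\<ge>k. c j = 0"
    using assms(1) by (auto simp: atomic_resimple_def)
  moreover have "\<forall>j\<ge>k. count_list w j = 0 \<and> \<not> has_period B j"
    using assms(2) has_period_less[OF basis] by (fastforce simp: count_list_0_iff)
  ultimately show ?thesis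
    by (auto simp: resimple_set_iff[OF basis] parikh_def) (metis leI)
qed

theorem mainTheorem5:
  fixes k :: nat and c :: "nat \<Rightarrow> nat" and B :: "(nat \<Rightarrow> nat) set"
  assumes "atomic_resimple k c B"
  shows "complete_det (shuffle (map (autj c B) [0..<k])) {..<k}
       \<and> lang (shuffle (map (autj c B) [0..<k])) {..<k}
           = {w \<in> lists {..<k}. parikh w \<in> resimple_set c B}
       \<and> card (astates (shuffle (map (autj c B) [0..<k]))) = (\<Prod>j<k. c j + pj B j)"
proof -
  have pj_positive: "\<And>j. 0 < pj B j"
    using assms pj_pos by (auto simp: atomic_resimple_def)
  interpret one_letter_dfas "map (autj c B) [0..<k]" "autj_step c B" "\<lambda>_. Some 0"
    using one_letter_dfas_autj pj_positive .
  have "lang (shuffle (map (autj c B) [0..<k])) {..<k} =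
      {w \<in> lists {..<k}. \<forall>j<k. (autj_step c B j ^^ count_list w j) (Some 0) = Some (c j)}"
    using lang_shuffle by simp
  also have "\<dots> = {w \<in> lists {..<k}. parikh w \<in> resimple_set c B}"
  proof (intro Collect_cong)
    fix w
    show "w \<in> lists {..<k} \<and> (\<forall>j<k. (autj_step c B j ^^ count_list w j) (Some 0) = Some (c j)) \<longleftrightarrow>
        w \<in> lists {..<k} \<and> parikh w \<in> resimple_set c B"
      by (cases "w \<in> lists {..<k}")
        (simp_all add: autj_accepts_iff[OF pj_positive] parikh_in_resimple_set_iff[OF assms])
  qed
  moreover have "card (astates (shuffle (map (autj c B) [0..<k]))) = (\<Prod>j<k. c j + pj B j)"
    unfolding card_shuffle_astates by (auto simp: card_astates_autj intro: prod.cong)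
  ultimately show ?thesis
    using complete_det_shuffle by simp
qed

end
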